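(* Let $b\ge 2$ be an integer and let $w=d_1\dots d_p$ be a fixed block of $b$-ary digits of length $p\ge 1$. For each integer $k\ge 0$ let $$S_w(k)=\sum_{m}\frac1m,$$ where the sum runs over all positive integers $m$ whose minimal base-$b$ representation (the string of $b$-ary digits without leading zeros) contains exactly $k$ occurrences of $w$, counting possibly overlapping occurrences. Then for every integer $k\ge 1$, $$\Bigl|S_w(k)-b^{p}\log(b)\Bigr|\le (b-1)\,b^{\,p-\max(k,2)+1}.$$
   Context: An occurrence of $w$ in a string $X=x_1\dots x_l$ is an index $i$ with $1\le i\le l-p+1$ and $x_i x_{i+1}\dots x_{i+p-1}=w$. Different occurrences may overlap. *)

theory Defs
  imports "HOL-Analysis.Analysis"
begin

function digits_rev :: "nat \<Rightarrow> nat \<Rightarrow> nat list" where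
  "digits_rev b m = (if m = 0 \<or> b < 2 then [] else (m mod b) # digits_rev b (m div b))"
  by auto
termination by (relation "Wellfounded.measure snd") auto

declare digits_rev.simps[simp del]

definition digits :: "nat \<Rightarrow> nat \<Rightarrow> nat list" where
  "digits b m = rev (digits_rev b m)"

definition occurrences :: "'a list \<Rightarrow> 'a list \<Rightarrow> nat" where
  "occurrences w X = card {i. i + length w \<le> length X \<and> take (length w) (drop i X) = w}"

definition occ_set :: "nat \<Rightarrow> nat list \<Rightarrow> nat \<Rightarrow> nat set" where
  "occ_set b w k = {m. m > 0 \<and> occurrences w (digits b m) = k}"

end

(* Cut the digit string of a number with exactly k occurrences of w (p = |w|) right after its
   last occurrence of w.  This writes it uniquely as Y @ S, where the "first hit" Y is the
   shortest prefix with k occurrences and the tail S is such that w @ S contains w only once.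
   Classifying all words by their last occurrence of w shows that the tails of length j, weighted
   by b^-j, have total mass b^p.  Hence, for a fixed first hit Y of value y, the reciprocals of the
   numbers with digits Y @ S add up to a value between b^p/(y+1) and b^p/y, which differs from
   b^p ln(1 + 1/y) by at most b^p/(y(y+1)).
   Now ln(1 + 1/y) is the logarithmic length of [y, y + 1], which is additive under b-adic
   refinement.  The first hits are prefix-free, and almost every long digit string extends one of
   them because almost all long strings contain w at least k times; so their logarithmic lengths
   add up to ln b.  As first hits have at least k + p - 1 digits, the errors add up to at most
   (1 - 1/b) b^(2-k-p).  This gives |S_w(k) - b^p ln b| <= (b - 1) b^(1-k), which implies the
   stated bound. *)

theory Submission
  imports Defs "HOL-Library.Sublist"
begin

section \<open>Occurrences of a word\<close>

definition occurrence_positions :: "'a list \<Rightarrow> 'a list \<Rightarrow> nat set" where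
  "occurrence_positions w X = {i. i + length w \<le> length X \<and> take (length w) (drop i X) = w}"

lemma occurrences_eq_card_positions: "occurrences w X = card (occurrence_positions w X)"
  by (simp add: occurrences_def occurrence_positions_def)

lemma finite_occurrence_positions [simp]: "finite (occurrence_positions w X)"
  by (rule finite_subset[of _ "{..length X}"]) (auto simp: occurrence_positions_def)

lemma occurrence_positions_snoc:
  "occurrence_positions w (X @ [d]) = occurrence_positions w X \<union>
    (if suffix w (X @ [d]) then {length X + 1 - length w} else {})"
  (is "?new = ?old \<union> ?at_end")
proof (intro set_eqI iffI)
  fix i assume "i \<in> ?new"
  then have i: "i + length w \<le> length X + 1" "take (length w) (drop i (X @ [d])) = w"
    by (auto simp: occurrence_positions_def)
  show "i \<in> ?old \<union> ?at_end"
  proof (cases "i + length w \<le> length X")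
    case True
    then show ?thesis using i by (auto simp: occurrence_positions_def)
  next
    case False
    then have "drop i (X @ [d]) = w" and "i = length X + 1 - length w" using i by simp_all
    moreover from this have "suffix w (X @ [d])" by (metis suffix_drop)
    ultimately show ?thesis by (simp del: suffix_snoc)
  qed
next
  fix i assume "i \<in> ?old \<union> ?at_end"
  then show "i \<in> ?new"
  proof
    assume "i \<in> ?old"
    then show ?thesis by (auto simp: occurrence_positions_def)
  next
    assume "i \<in> ?at_end"
    then have "suffix w (X @ [d])" and i: "i = length X + 1 - length w"
      by (simp_all split: if_splits)
    then obtain A where A: "X @ [d] = A @ w" by (auto simp: suffix_def simp del: suffix_snoc)
    have "length X + 1 = length A + length w" using arg_cong[OF A, of length] by simp
    then have "length A = i" using i by simp
    then show ?thesis using A by (simp add: occurrence_positions_def)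
  qed
qed

lemma occurrences_snoc:
  assumes "w \<noteq> []"
  shows "occurrences w (X @ [d]) = occurrences w X + (if suffix w (X @ [d]) then 1 else 0)"
proof -
  have "occurrence_positions w X \<inter> (if suffix w (X @ [d]) then {length X + 1 - length w} else {}) = {}"
    using assms by (auto simp: occurrence_positions_def)
  then show ?thesis
    by (simp add: occurrences_eq_card_positions occurrence_positions_snoc card_Un_disjoint del: suffix_snoc)
qed

lemma occurrences_short: "length X < length w \<Longrightarrow> occurrences w X = 0"
  unfolding occurrences_def by auto

lemma occurrences_le_length: "occurrences w X \<le> length X + 1 - length w"
proof -
  have "occurrence_positions w X \<subseteq> {..<length X + 1 - length w}"
    by (auto simp: occurrence_positions_def)
  then show ?thesis
    unfolding occurrences_eq_card_positions by (metis card_lessThan card_mono finite_lessThan)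
qed

lemma suffix_append_long: "length w \<le> length M \<Longrightarrow> suffix w (A @ M) \<longleftrightarrow> suffix w M"
  by (auto simp: suffix_append)

lemma occurrences_append_mono:
  assumes "w \<noteq> []"
  shows "occurrences w X \<le> occurrences w (X @ S)"
proof (induction S rule: rev_induct)
  case (snoc d S)
  then show ?case using occurrences_snoc[OF assms, of "X @ S" d] by simp
qed simp

lemma occurrences_append_ge:
  assumes "w \<noteq> []"
  shows "occurrences w X + occurrences w S \<le> occurrences w (X @ S)"
proof (induction S rule: rev_induct)
  case Nil
  then show ?case using occurrences_short[of "[]" w] assms by simp
next
  case (snoc d S)
  have "suffix w (S @ [d]) \<Longrightarrow> suffix w (X @ S @ [d])" by (rule suffix_appendI)
  then show ?case using occurrences_snoc[OF assms, of "X @ S" d] occurrences_snoc[OF assms, of S d] snoc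
    by (auto split: if_splits)
qed

lemma occurrences_self:
  assumes "w \<noteq> []"
  shows "occurrences w w = 1"
proof -
  have w: "w = butlast w @ [last w]" using assms by simp
  have "occurrences w (butlast w) = 0" using assms by (intro occurrences_short) simp
  then show ?thesis using occurrences_snoc[OF assms, of "butlast w" "last w"] w by simp
qed

lemma occurrences_self_append_ge_1:
  assumes "w \<noteq> []"
  shows "1 \<le> occurrences w (w @ S)"
  using occurrences_append_mono[OF assms, of w S] occurrences_self[OF assms] by simp

text \<open>An occurrence starting at or before the marked copy of \<open>w\<close> lies inside \<open>A @ w\<close>, a later
  one inside \<open>w @ S\<close>; the marked copy is counted on both sides.\<close>

lemma occurrences_join:
  assumes "w \<noteq> []"
  shows "occurrences w (A @ w @ S) = occurrences w (A @ w) + occurrences w (w @ S) - 1"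
proof (induction S rule: rev_induct)
  case Nil
  then show ?case using occurrences_self[OF assms] by simp
next
  case (snoc d S)
  have "suffix w (A @ (w @ S @ [d])) \<longleftrightarrow> suffix w (w @ S @ [d])" by (rule suffix_append_long) simp
  then show ?case using occurrences_snoc[OF assms, of "A @ w @ S" d]
      occurrences_snoc[OF assms, of "w @ S" d] snoc occurrences_self_append_ge_1[OF assms, of S]
    by auto
qed

lemma last_occurrence_exists:
  assumes "w \<noteq> []" "1 \<le> occurrences w u"
  shows "\<exists>A S. u = A @ w @ S \<and> occurrences w (w @ S) = 1"
  using assms(2)
proof (induction u rule: rev_induct)
  case Nil
  then show ?case using occurrences_short[of "[]" w] assms(1) by simp
next
  case (snoc d u)
  show ?case
  proof (cases "suffix w (u @ [d])")
    case True
    then obtain A where "u @ [d] = A @ w" by (auto simp: suffix_def)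
    then show ?thesis using occurrences_self[OF assms(1)] by (intro exI[of _ A] exI[of _ "[]"]) simp
  next
    case False
    then have "1 \<le> occurrences w u"
      using snoc.prems occurrences_snoc[OF assms(1), of u d] by (simp del: suffix_snoc)
    then obtain A S where AS: "u = A @ w @ S" "occurrences w (w @ S) = 1" using snoc.IH by blast
    have "suffix w (A @ (w @ S @ [d])) \<longleftrightarrow> suffix w (w @ S @ [d])" by (rule suffix_append_long) simp
    then have "occurrences w (w @ S @ [d]) = 1"
      using False AS occurrences_snoc[OF assms(1), of "w @ S" d] by simp
    then show ?thesis using AS by (intro exI[of _ A] exI[of _ "S @ [d]"]) simp
  qed
qed

lemma occurrences_shifted_self_ge_2:
  assumes "w \<noteq> []" "X \<noteq> []" "w @ T = X @ w @ T'"
  shows "2 \<le> occurrences w (X @ w)"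
proof -
  obtain v c where w: "w = v @ [c]" using assms(1) by (metis rev_exhaust)
  have "length w \<le> length (X @ v)" using assms(2) w by (cases X) auto
  then have "take (length w) (X @ v) = take (length w) (X @ w @ T')" using w by simp
  also have "\<dots> = w" by (metis assms(3) append_eq_conv_conj)
  finally have "X @ v = w @ drop (length w) (X @ v)" by (metis append_take_drop_id)
  then have "1 \<le> occurrences w (X @ v)" using occurrences_self_append_ge_1[OF assms(1)] by metis
  moreover have "suffix w (X @ w)" unfolding suffix_def by blast
  ultimately show ?thesis using occurrences_snoc[OF assms(1), of "X @ v" c] w by (simp del: suffix_snoc)
qed

lemma last_occurrence_unique:
  assumes "w \<noteq> []" "A @ w @ S = A' @ w @ S'"
    and "occurrences w (w @ S) = 1" "occurrences w (w @ S') = 1"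
  shows "A = A' \<and> S = S'"
proof -
  have no_shift: "X = []" if "w @ T = X @ w @ T'" "occurrences w (w @ T) = 1"
      "occurrences w (w @ T') = 1" for X T T'
  proof (rule ccontr)
    assume "X \<noteq> []"
    then have "2 \<le> occurrences w (X @ w)"
      using occurrences_shifted_self_ge_2[OF assms(1) _ that(1)] by blast
    then show False using that occurrences_join[OF assms(1), of X T'] by simp
  qed
  obtain us where "A = A' @ us \<and> us @ w @ S = w @ S' \<or> A @ us = A' \<and> w @ S = us @ w @ S'"
    using assms(2) append_eq_append_conv2[of A "w @ S" A' "w @ S'"] by blast
  then show ?thesis
  proof
    assume "A = A' @ us \<and> us @ w @ S = w @ S'"
    then show ?thesis using no_shift[of S' us S] assms(3,4) by simp
  next
    assume "A @ us = A' \<and> w @ S = us @ w @ S'"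
    then show ?thesis using no_shift[of S us S'] assms(3,4) by simp
  qed
qed

section \<open>Base-\<open>b\<close> representations\<close>

definition of_digits :: "nat \<Rightarrow> nat list \<Rightarrow> nat" where
  "of_digits b L = foldl (\<lambda>a d. a * b + d) 0 L"

lemma of_digits_Nil [simp]: "of_digits b [] = 0"
  by (simp add: of_digits_def)

lemma of_digits_single [simp]: "of_digits b [d] = d"
  by (simp add: of_digits_def)

lemma of_digits_snoc [simp]: "of_digits b (L @ [d]) = of_digits b L * b + d"
  by (simp add: of_digits_def)

lemma of_digits_append: "of_digits b (L @ M) = of_digits b L * b ^ length M + of_digits b M"
proof (induction M rule: rev_induct)
  case (snoc d M)
  then show ?case by (simp add: algebra_simps flip: append_assoc)
qed simp

lemma of_digits_Cons: "of_digits b (d # M) = d * b ^ length M + of_digits b M"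
  using of_digits_append[of b "[d]" M] by (simp add: of_digits_def)

lemma of_digits_less: "set M \<subseteq> {..<b} \<Longrightarrow> of_digits b M < b ^ length M"
proof (induction M rule: rev_induct)
  case (snoc d M)
  then have "of_digits b M + 1 \<le> b ^ length M" "d < b" by auto
  then have "of_digits b M * b + d < (of_digits b M + 1) * b" by (simp add: algebra_simps)
  also have "\<dots> \<le> b ^ length M * b" using \<open>of_digits b M + 1 \<le> b ^ length M\<close> by (rule mult_right_mono) simp
  finally show ?case by (simp add: mult.commute)
qed simp

definition canonical :: "nat \<Rightarrow> nat list set" where
  "canonical b = {L. L \<noteq> [] \<and> hd L \<noteq> 0 \<and> set L \<subseteq> {..<b}}"

lemma canonical_append: "L \<in> canonical b \<Longrightarrow> set S \<subseteq> {..<b} \<Longrightarrow> L @ S \<in> canonical b"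
  by (auto simp: canonical_def)

lemma of_digits_ge_canonical: "L \<in> canonical b \<Longrightarrow> b ^ (length L - 1) \<le> of_digits b L"
  by (cases L) (auto simp: canonical_def of_digits_Cons trans_le_add1)

lemma of_digits_pos: "0 < b \<Longrightarrow> L \<in> canonical b \<Longrightarrow> 0 < of_digits b L"
  using of_digits_ge_canonical[of L b] by (metis le_zero_eq neq0_conv power_not_zero)

lemma digits_0 [simp]: "digits b 0 = []"
  by (simp add: digits_def digits_rev.simps)

lemma digits_snoc: "2 \<le> b \<Longrightarrow> 0 < m \<Longrightarrow> digits b m = digits b (m div b) @ [m mod b]"
  by (simp add: digits_def digits_rev.simps[of b m])

lemma of_digits_digits: "2 \<le> b \<Longrightarrow> of_digits b (digits b m) = m"
proof (induction m rule: less_induct)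
  case (less m)
  then show ?case by (cases "m = 0") (simp_all add: digits_snoc)
qed

lemma digits_in_canonical: "2 \<le> b \<Longrightarrow> 0 < m \<Longrightarrow> digits b m \<in> canonical b"
proof (induction m rule: less_induct)
  case (less m)
  show ?case
  proof (cases "m div b = 0")
    case True
    then have "m < b" using less.prems by (simp add: div_eq_0_iff)
    then have "digits b m = [m]" using less.prems by (simp add: digits_snoc)
    then show ?thesis using \<open>m < b\<close> less.prems by (simp add: canonical_def)
  next
    case False
    then have "digits b (m div b) \<in> canonical b" using less by simp
    then show ?thesis using less.prems by (simp add: digits_snoc canonical_append)
  qed
qed

lemma digits_of_digits: "2 \<le> b \<Longrightarrow> L \<in> canonical b \<Longrightarrow> digits b (of_digits b L) = L"
proof (induction L rule: rev_induct)
  case (snoc d L)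
  then have "d < b" by (simp add: canonical_def)
  show ?case
  proof (cases "L = []")
    case True
    then show ?thesis using snoc.prems \<open>d < b\<close> by (simp add: canonical_def digits_snoc)
  next
    case False
    then have "L \<in> canonical b" using snoc.prems by (simp add: canonical_def)
    moreover from this have "0 < of_digits b L * b + d" using snoc.prems(1) of_digits_pos[of b L] by simp
    ultimately show ?thesis using snoc \<open>d < b\<close> by (simp add: digits_snoc)
  qed
qed (simp add: canonical_def)

lemma bij_betw_of_digits:
  assumes "2 \<le> b"
  shows "bij_betw (of_digits b) {L \<in> canonical b. P L} {m. 0 < m \<and> P (digits b m)}"
  by (rule bij_betw_byWitness[where f' = "digits b"])
    (use assms in \<open>auto simp: digits_of_digits of_digits_digits digits_in_canonical of_digits_pos\<close>)

section \<open>Logarithmic length of \<open>b\<close>-adic intervals\<close>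

text \<open>\<open>log_width x\<close> and \<open>inv_width x\<close> are the integrals of \<open>1/t\<close> and \<open>1/t\<^sup>2\<close> over \<open>[x, x + 1]\<close>.
  Splitting \<open>[b x, b x + b]\<close> into its unit intervals therefore preserves the first and divides
  the second by \<open>b\<close>.\<close>

definition log_width :: "real \<Rightarrow> real" where
  "log_width x = ln (1 + 1 / x)"

definition inv_width :: "real \<Rightarrow> real" where
  "inv_width x = 1 / x - 1 / (x + 1)"

lemma log_width_nonneg: "0 < x \<Longrightarrow> 0 \<le> log_width x"
  by (simp add: log_width_def)

lemma inv_width_nonneg: "0 < x \<Longrightarrow> 0 \<le> inv_width x"
  by (simp add: inv_width_def frac_le)

lemma log_width_le: "0 < x \<Longrightarrow> log_width x \<le> 1 / x"
  unfolding log_width_def by (rule ln_add_one_self_le_self) simp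

lemma log_width_ge: "0 < x \<Longrightarrow> 1 / (x + 1) \<le> log_width x"
proof -
  assume x: "0 < x"
  have "ln (x / (x + 1)) \<le> x / (x + 1) - 1" using x by (intro ln_le_minus_one) simp
  moreover have "ln (x / (x + 1)) = - ln (1 + 1 / x)" using x by (simp add: ln_div field_simps)
  moreover have "x / (x + 1) - 1 = - (1 / (x + 1))" using x by (simp add: field_simps)
  ultimately show ?thesis unfolding log_width_def by linarith
qed

lemma inverse_le_log_width_add_inv_width: "0 < x \<Longrightarrow> 1 / x \<le> log_width x + inv_width x"
  using log_width_ge[of x] by (simp add: inv_width_def)

lemma log_width_diff_inv_width_le: "0 < x \<Longrightarrow> log_width x - inv_width x \<le> 1 / (x + 1)"
  using log_width_le[of x] by (simp add: inv_width_def)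

lemma sum_log_width_children:
  assumes "0 < x" "0 < b"
  shows "(\<Sum>d<b. log_width (x * real b + real d)) = log_width x"
proof -
  have "(\<Sum>d<b. log_width (x * b + real d)) = (\<Sum>d<b. ln (x * b + real (Suc d)) - ln (x * b + real d))"
  proof (rule sum.cong[OF refl])
    fix d
    have pos: "0 < x * b + real d" using assms by (simp add: add_pos_nonneg)
    then have "1 + 1 / (x * b + real d) = (x * b + real (Suc d)) / (x * b + real d)"
      by (simp add: field_simps)
    then show "log_width (x * b + d) = ln (x * b + real (Suc d)) - ln (x * b + real d)"
      unfolding log_width_def using pos by (simp add: ln_div)
  qed
  also have "\<dots> = ln ((x + 1) * b) - ln (x * b)"
    by (subst sum_lessThan_telescope) (simp add: algebra_simps)
  also have "\<dots> = ln (x + 1) - ln x"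
    using assms ln_mult[of "x + 1" b] ln_mult[of x b] by simp
  also have "\<dots> = log_width x"
  proof -
    have "1 + 1 / x = (x + 1) / x" using assms by (simp add: field_simps)
    then show ?thesis using assms by (simp add: log_width_def ln_div)
  qed
  finally show ?thesis .
qed

lemma sum_inv_width_children:
  assumes "0 < x"
  shows "(\<Sum>d<b. inv_width (x * real b + real d)) = inv_width x / real b"
proof -
  have "(\<Sum>d<b. inv_width (x * b + real d)) = (\<Sum>d<b. 1 / (x * b + real d) - 1 / (x * b + real (Suc d)))"
    by (rule sum.cong[OF refl]) (simp add: inv_width_def add.assoc)
  also have "\<dots> = 1 / (x * b) - 1 / ((x + 1) * b)"
    by (subst sum_lessThan_telescope') (simp add: algebra_simps)
  also have "\<dots> = inv_width x / b"
    by (simp add: inv_width_def diff_divide_distrib)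
  finally show ?thesis .
qed

section \<open>Prefix-free sets of digit strings\<close>

definition prefix_free :: "'a list set \<Rightarrow> bool" where
  "prefix_free Q \<longleftrightarrow> (\<forall>Y\<in>Q. \<forall>Y'\<in>Q. prefix Y Y' \<longrightarrow> Y = Y')"

lemma prefix_free_subset: "prefix_free Q \<Longrightarrow> P \<subseteq> Q \<Longrightarrow> prefix_free P"
  by (auto simp: prefix_free_def)

lemma prefix_free_append_eq:
  assumes "prefix_free Q" "Y \<in> Q" "Y' \<in> Q" "Y @ S = Y' @ S'"
  shows "Y = Y'"
proof -
  have "prefix Y (Y @ S)" "prefix Y' (Y @ S)" by (simp, simp add: assms(4))
  then have "prefix Y Y' \<or> prefix Y' Y" by (rule prefix_same_cases)
  then show ?thesis using assms(1-3) unfolding prefix_free_def by auto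
qed

lemma sum_append_prefix_free:
  assumes "prefix_free Q"
  shows "(\<Sum>u\<in>(\<lambda>(Y, S). Y @ S) ` (Q \<times> T). f u) = (\<Sum>Y\<in>Q. \<Sum>S\<in>T. f (Y @ S))"
proof -
  have "inj_on (\<lambda>(Y, S). Y @ S) (Q \<times> T)"
    by (auto simp: inj_on_def dest: prefix_free_append_eq[OF assms])
  then show ?thesis by (simp add: sum.reindex sum.cartesian_product case_prod_unfold)
qed

locale digit_base =
  fixes b :: nat
  assumes base_ge_2: "2 \<le> b"
begin

definition words :: "nat \<Rightarrow> nat list set" where
  "words n = {S. set S \<subseteq> {..<b} \<and> length S = n}"

definition level :: "nat \<Rightarrow> nat list set" where
  "level N = {L \<in> canonical b. length L = N}"

abbreviation val :: "nat list \<Rightarrow> real" where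
  "val L \<equiv> real (of_digits b L)"

lemma base_pos: "0 < real b"
  using base_ge_2 by simp

lemma finite_words [simp]: "finite (words n)"
  unfolding words_def by (rule finite_lists_length_eq) simp

lemma card_words: "card (words n) = b ^ n"
  unfolding words_def using card_lists_length_eq[of "{..<b}" n] by simp

lemma words_0: "words 0 = {[]}"
  by (auto simp: words_def)

lemma words_Suc: "words (Suc n) = (\<lambda>(S, d). S @ [d]) ` (words n \<times> {..<b})"
proof (intro set_eqI iffI)
  fix u assume u: "u \<in> words (Suc n)"
  then obtain S d where "u = S @ [d]" by (cases u rule: rev_cases) (auto simp: words_def)
  then show "u \<in> (\<lambda>(S, d). S @ [d]) ` (words n \<times> {..<b})"
    using u by (auto simp: words_def intro!: rev_image_eqI[of "(S, d)"])
qed (auto simp: words_def)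

lemma words_add: "words (n + m) = (\<lambda>(x, y). x @ y) ` (words n \<times> words m)"
proof (intro set_eqI iffI)
  fix u assume "u \<in> words (n + m)"
  then have "(take n u, drop n u) \<in> words n \<times> words m"
    by (auto simp: words_def dest: in_set_takeD in_set_dropD)
  then show "u \<in> (\<lambda>(x, y). x @ y) ` (words n \<times> words m)" by (intro rev_image_eqI) auto
qed (auto simp: words_def)

lemma sum_words_Suc: "(\<Sum>S\<in>words (Suc n). f S) = (\<Sum>S\<in>words n. \<Sum>d<b. f (S @ [d]))"
proof -
  have "inj_on (\<lambda>(S, d). S @ [d]) (words n \<times> {..<b})" by (auto simp: inj_on_def)
  then have "(\<Sum>S\<in>words (Suc n). f S) = (\<Sum>(S, d)\<in>words n \<times> {..<b}. f (S @ [d]))"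
    by (simp add: words_Suc sum.reindex case_prod_unfold)
  then show ?thesis by (simp add: sum.cartesian_product)
qed

lemma val_pos: "Y \<in> canonical b \<Longrightarrow> 0 < val Y"
  using of_digits_pos[of b Y] base_ge_2 by simp

lemma val_ge: "Y \<in> canonical b \<Longrightarrow> real b ^ (length Y - 1) \<le> val Y"
  using of_digits_ge_canonical[of Y b] by (metis of_nat_le_iff of_nat_power)

lemma val_append_bounds:
  assumes "S \<in> words j"
  shows "val Y * real b ^ j \<le> val (Y @ S)" and "val (Y @ S) \<le> (val Y + 1) * real b ^ j"
proof -
  have eq: "val (Y @ S) = val Y * real b ^ j + val S"
    using assms by (simp add: of_digits_append words_def)
  have "val S < real b ^ j"
    using assms of_digits_less[of S b] by (simp add: words_def flip: of_nat_power)
  then show "val Y * real b ^ j \<le> val (Y @ S)" "val (Y @ S) \<le> (val Y + 1) * real b ^ j"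
    unfolding eq by (simp_all add: algebra_simps)
qed

lemma sum_log_width_extend:
  "Y \<in> canonical b \<Longrightarrow> (\<Sum>S\<in>words t. log_width (val (Y @ S))) = log_width (val Y)"
proof (induction t)
  case (Suc t)
  have "(\<Sum>S\<in>words (Suc t). log_width (val (Y @ S)))
      = (\<Sum>S\<in>words t. \<Sum>d<b. log_width (val (Y @ S) * b + d))"
    by (simp add: sum_words_Suc flip: append_assoc)
  also have "\<dots> = (\<Sum>S\<in>words t. log_width (val (Y @ S)))"
    using Suc.prems base_ge_2
    by (intro sum.cong refl sum_log_width_children val_pos canonical_append) (auto simp: words_def)
  finally show ?case using Suc by simp
qed (simp add: words_0)

lemma sum_inv_width_extend:
  "Y \<in> canonical b \<Longrightarrow> (\<Sum>S\<in>words t. inv_width (val (Y @ S))) = inv_width (val Y) / real b ^ t"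
proof (induction t)
  case (Suc t)
  have "(\<Sum>S\<in>words (Suc t). inv_width (val (Y @ S)))
      = (\<Sum>S\<in>words t. \<Sum>d<b. inv_width (val (Y @ S) * b + d))"
    by (simp add: sum_words_Suc flip: append_assoc)
  also have "\<dots> = (\<Sum>S\<in>words t. inv_width (val (Y @ S))) / b"
    using Suc.prems unfolding sum_divide_distrib
    by (intro sum.cong refl sum_inv_width_children val_pos canonical_append) (auto simp: words_def)
  finally show ?case using Suc by simp
qed (simp add: words_0)

lemma finite_level [simp]: "finite (level N)"
  by (rule finite_subset[OF _ finite_words[of N]]) (auto simp: level_def canonical_def words_def)

lemma level_prefix_eq_image:
  assumes "Y \<in> canonical b" "length Y \<le> N"
  shows "{u \<in> level N. prefix Y u} = (\<lambda>S. Y @ S) ` words (N - length Y)"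
proof (intro set_eqI iffI)
  fix u assume "u \<in> {u \<in> level N. prefix Y u}"
  then obtain S where "u = Y @ S" "u \<in> level N" by (auto simp: prefix_def)
  then show "u \<in> (\<lambda>S. Y @ S) ` words (N - length Y)"
    by (auto simp: level_def canonical_def words_def)
qed (use assms in \<open>auto simp: level_def words_def intro: canonical_append\<close>)

lemma sum_level_prefix:
  assumes "Y \<in> canonical b" "length Y \<le> N"
  shows "(\<Sum>u\<in>{u \<in> level N. prefix Y u}. f u) = (\<Sum>S\<in>words (N - length Y). f (Y @ S))"
  unfolding level_prefix_eq_image[OF assms] by (simp add: sum.reindex inj_on_def)

lemma sum_log_width_level_prefix:
  "Y \<in> canonical b \<Longrightarrow> length Y \<le> N \<Longrightarrow>
    (\<Sum>u\<in>{u \<in> level N. prefix Y u}. log_width (val u)) = log_width (val Y)"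
  by (simp add: sum_level_prefix sum_log_width_extend)

lemma sum_inv_width_level_prefix:
  "Y \<in> canonical b \<Longrightarrow> length Y \<le> N \<Longrightarrow>
    (\<Sum>u\<in>{u \<in> level N. prefix Y u}. inv_width (val u)) = inv_width (val Y) / real b ^ (N - length Y)"
  by (simp add: sum_level_prefix sum_inv_width_extend)

lemma sum_level_prefix_free:
  assumes "finite Q" "prefix_free Q"
  shows "(\<Sum>Y\<in>Q. \<Sum>u\<in>{u \<in> level N. prefix Y u}. f u) = (\<Sum>u\<in>{u \<in> level N. \<exists>Y\<in>Q. prefix Y u}. f u)"
proof -
  have "{u \<in> level N. \<exists>Y\<in>Q. prefix Y u} = (\<Union>Y\<in>Q. {u \<in> level N. prefix Y u})" by blast
  moreover have "{u \<in> level N. prefix Y u} \<inter> {u \<in> level N. prefix Y' u} = {}"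
    if "Y \<in> Q" "Y' \<in> Q" "Y \<noteq> Y'" for Y Y'
  proof -
    have "\<not> prefix Y Y'" "\<not> prefix Y' Y" using that assms(2) by (auto simp: prefix_free_def)
    then show ?thesis using prefix_same_cases[of Y _ Y'] by blast
  qed
  ultimately show ?thesis using assms(1) by (simp add: sum.UNION_disjoint)
qed

lemma sum_level_by_first_digit:
  assumes "1 \<le> N"
  shows "(\<Sum>u\<in>level N. f u) = (\<Sum>d\<in>{1..<b}. \<Sum>u\<in>{u \<in> level N. prefix [d] u}. f u)"
proof -
  have "level N = (\<Union>d\<in>{1..<b}. {u \<in> level N. prefix [d] u})"
  proof (intro set_eqI iffI)
    fix u assume u: "u \<in> level N"
    then obtain d S where "u = d # S" "d \<in> {1..<b}"
      using assms by (cases u) (auto simp: level_def canonical_def)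
    then show "u \<in> (\<Union>d\<in>{1..<b}. {u \<in> level N. prefix [d] u})" using u by auto
  qed blast
  then have "(\<Sum>u\<in>level N. f u) = sum f (\<Union>d\<in>{1..<b}. {u \<in> level N. prefix [d] u})"
    by (rule arg_cong)
  also have "\<dots> = (\<Sum>d\<in>{1..<b}. \<Sum>u\<in>{u \<in> level N. prefix [d] u}. f u)"
    by (rule sum.UNION_disjoint) (auto simp: prefix_def)
  finally show ?thesis .
qed

lemma sum_log_width_level: "1 \<le> N \<Longrightarrow> (\<Sum>u\<in>level N. log_width (val u)) = ln b"
proof -
  assume N: "1 \<le> N"
  have "(\<Sum>u\<in>level N. log_width (val u)) = (\<Sum>d\<in>{1..<b}. log_width (real d))"
    unfolding sum_level_by_first_digit[OF N]
  proof (intro sum.cong refl)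
    fix d assume "d \<in> {1..<b}"
    then have "[d] \<in> canonical b" by (simp add: canonical_def)
    then show "(\<Sum>u\<in>{u \<in> level N. prefix [d] u}. log_width (val u)) = log_width (real d)"
      using N sum_log_width_level_prefix[of "[d]" N] by simp
  qed
  also have "\<dots> = (\<Sum>d\<in>{1..<b}. ln (real (Suc d)) - ln (real d))"
    by (intro sum.cong refl) (simp add: log_width_def field_simps ln_div)
  also have "\<dots> = ln b"
    using base_ge_2 by (subst sum_Suc_diff') auto
  finally show ?thesis .
qed

lemma sum_inv_width_level:
  "1 \<le> N \<Longrightarrow> (\<Sum>u\<in>level N. inv_width (val u)) = (1 - 1 / b) / real b ^ (N - 1)"
proof -
  assume N: "1 \<le> N"
  have "(\<Sum>u\<in>level N. inv_width (val u)) = (\<Sum>d\<in>{1..<b}. inv_width (real d) / real b ^ (N - 1))"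
    unfolding sum_level_by_first_digit[OF N]
  proof (intro sum.cong refl)
    fix d assume "d \<in> {1..<b}"
    then have "[d] \<in> canonical b" by (simp add: canonical_def)
    then show "(\<Sum>u\<in>{u \<in> level N. prefix [d] u}. inv_width (val u)) = inv_width (real d) / real b ^ (N - 1)"
      using N sum_inv_width_level_prefix[of "[d]" N] by simp
  qed
  also have "\<dots> = (\<Sum>d\<in>{1..<b}. (- 1 / real (Suc d)) - (- 1 / real d)) / real b ^ (N - 1)"
    by (simp add: sum_divide_distrib inv_width_def add.commute)
  also have "\<dots> = (1 - 1 / b) / real b ^ (N - 1)"
    using base_ge_2 by (subst sum_Suc_diff') auto
  finally show ?thesis .
qed

lemma sum_log_width_prefix_free:
  assumes "finite Q" "prefix_free Q" "Q \<subseteq> canonical b" "\<forall>Y\<in>Q. length Y \<le> N"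
  shows "(\<Sum>Y\<in>Q. log_width (val Y)) = (\<Sum>u\<in>{u \<in> level N. \<exists>Y\<in>Q. prefix Y u}. log_width (val u))"
proof -
  have "(\<Sum>Y\<in>Q. log_width (val Y)) = (\<Sum>Y\<in>Q. \<Sum>u\<in>{u \<in> level N. prefix Y u}. log_width (val u))"
    using assms(3,4) by (intro sum.cong refl sum_log_width_level_prefix[symmetric]) auto
  also have "\<dots> = (\<Sum>u\<in>{u \<in> level N. \<exists>Y\<in>Q. prefix Y u}. log_width (val u))"
    by (rule sum_level_prefix_free[OF assms(1,2)])
  finally show ?thesis .
qed

lemma sum_log_width_prefix_free_le:
  assumes "finite Q" "prefix_free Q" "Q \<subseteq> canonical b"
  shows "(\<Sum>Y\<in>Q. log_width (val Y)) \<le> ln b"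
proof -
  obtain M where M: "\<forall>Y\<in>Q. length Y \<le> M"
    using assms(1) finite_nat_set_iff_bounded_le[of "length ` Q"] by auto
  then have "(\<Sum>Y\<in>Q. log_width (val Y))
      = (\<Sum>u\<in>{u \<in> level (Suc M). \<exists>Y\<in>Q. prefix Y u}. log_width (val u))"
    by (intro sum_log_width_prefix_free assms) auto
  also have "\<dots> \<le> (\<Sum>u\<in>level (Suc M). log_width (val u))"
    by (rule sum_mono2[OF finite_level]) (auto simp: level_def intro: log_width_nonneg val_pos)
  also have "\<dots> = ln b" by (simp add: sum_log_width_level)
  finally show ?thesis .
qed

lemma sum_log_width_prefix_free_ge:
  assumes "finite Q" "prefix_free Q" "Q \<subseteq> canonical b" "\<forall>Y\<in>Q. length Y \<le> N" "1 \<le> N"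
  shows "ln b - card {u \<in> level N. \<not> (\<exists>Y\<in>Q. prefix Y u)} / real b ^ (N - 1)
    \<le> (\<Sum>Y\<in>Q. log_width (val Y))"
proof -
  let ?C = "{u \<in> level N. \<exists>Y\<in>Q. prefix Y u}" and ?U = "{u \<in> level N. \<not> (\<exists>Y\<in>Q. prefix Y u)}"
  have "level N = ?C \<union> ?U" by blast
  then have "ln b = (\<Sum>u\<in>?C \<union> ?U. log_width (val u))"
    using sum_log_width_level[OF assms(5)] by simp
  also have "\<dots> = (\<Sum>u\<in>?C. log_width (val u)) + (\<Sum>u\<in>?U. log_width (val u))"
    by (rule sum.union_disjoint) auto
  also have "(\<Sum>u\<in>?U. log_width (val u)) \<le> (\<Sum>u\<in>?U. 1 / real b ^ (N - 1))"
  proof (rule sum_mono)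
    fix u assume "u \<in> ?U"
    then have u: "u \<in> canonical b" "length u = N" by (auto simp: level_def)
    have "log_width (val u) \<le> 1 / val u" by (rule log_width_le[OF val_pos[OF u(1)]])
    also have "\<dots> \<le> 1 / real b ^ (N - 1)"
      using val_ge[OF u(1)] val_pos[OF u(1)] base_pos u(2) by (intro divide_left_mono) auto
    finally show "log_width (val u) \<le> 1 / real b ^ (N - 1)" .
  qed
  finally show ?thesis using sum_log_width_prefix_free[OF assms(1-4)] by simp
qed

lemma inv_width_le_sum_level_prefix:
  assumes "Y \<in> canonical b" "m \<le> length Y" "length Y \<le> N"
  shows "inv_width (val Y) \<le> real b ^ (N - m) * (\<Sum>u\<in>{u \<in> level N. prefix Y u}. inv_width (val u))"
proof -
  let ?s = "\<Sum>u\<in>{u \<in> level N. prefix Y u}. inv_width (val u)"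
  have s: "?s = inv_width (val Y) / real b ^ (N - length Y)"
    by (rule sum_inv_width_level_prefix[OF assms(1,3)])
  then have "inv_width (val Y) = real b ^ (N - length Y) * ?s"
    using base_pos by simp
  also have "\<dots> \<le> real b ^ (N - m) * ?s"
    using assms base_ge_2 inv_width_nonneg[OF val_pos[OF assms(1)]] base_pos
    by (intro mult_right_mono power_increasing) (auto simp: s)
  finally show ?thesis .
qed

lemma sum_inv_width_prefix_free_le:
  assumes "finite Q" "prefix_free Q" "Q \<subseteq> canonical b" "1 \<le> m" "\<forall>Y\<in>Q. m \<le> length Y"
  shows "(\<Sum>Y\<in>Q. inv_width (val Y)) \<le> (1 - 1 / b) / real b ^ (m - 1)"
proof -
  obtain M where M: "\<forall>Y\<in>Q. length Y \<le> M"
    using assms(1) finite_nat_set_iff_bounded_le[of "length ` Q"] by auto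
  define N where "N = max m M"
  have N: "m \<le> N" "\<forall>Y\<in>Q. length Y \<le> N" using M by (auto simp: N_def)
  have "(\<Sum>Y\<in>Q. inv_width (val Y))
      \<le> (\<Sum>Y\<in>Q. real b ^ (N - m) * (\<Sum>u\<in>{u \<in> level N. prefix Y u}. inv_width (val u)))"
    using assms(3,5) N by (intro sum_mono inv_width_le_sum_level_prefix) auto
  also have "\<dots> = real b ^ (N - m) * (\<Sum>u\<in>{u \<in> level N. \<exists>Y\<in>Q. prefix Y u}. inv_width (val u))"
    by (simp add: sum_distrib_left[symmetric] sum_level_prefix_free[OF assms(1,2)])
  also have "\<dots> \<le> real b ^ (N - m) * (\<Sum>u\<in>level N. inv_width (val u))"
    by (intro mult_left_mono sum_mono2[OF finite_level]) (auto simp: level_def intro: inv_width_nonneg val_pos)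
  also have "\<dots> = (1 - 1 / b) / real b ^ (m - 1)"
  proof -
    have "real b ^ (N - 1) = real b ^ (N - m) * real b ^ (m - 1)"
      using N assms(4) by (simp flip: power_add)
    then show ?thesis using N assms(4) base_pos by (simp add: sum_inv_width_level)
  qed
  finally show ?thesis .
qed

end

section \<open>Counting words by their occurrences of \<open>w\<close>\<close>

locale digit_word = digit_base +
  fixes w :: "nat list"
  assumes w_ne: "w \<noteq> []" and w_digits: "set w \<subseteq> {..<b}"
begin

abbreviation occ :: "nat list \<Rightarrow> nat" where
  "occ L \<equiv> occurrences w L"

definition once_tails :: "nat \<Rightarrow> nat list set" where
  "once_tails j = {S \<in> words j. occ (w @ S) = 1}"

definition few_occ :: "nat \<Rightarrow> nat \<Rightarrow> nat list set" where
  "few_occ k n = {S \<in> words n. occ S < k}"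

definition few_occ_density :: "nat \<Rightarrow> nat \<Rightarrow> real" where
  "few_occ_density k n = card (few_occ k n) / real b ^ n"

lemma finite_once_tails [simp]: "finite (once_tails j)"
  by (simp add: once_tails_def)

lemma finite_few_occ [simp]: "finite (few_occ k n)"
  by (simp add: few_occ_def)

lemma w_in_words: "w \<in> words (length w)"
  using w_digits by (simp add: words_def)

definition last_occurrence_words :: "nat \<Rightarrow> nat \<Rightarrow> nat list set" where
  "last_occurrence_words J j = (\<lambda>(A, S). A @ w @ S) ` (words (J - j) \<times> once_tails j)"

lemma finite_last_occurrence_words [simp]: "finite (last_occurrence_words J j)"
  by (simp add: last_occurrence_words_def)

lemma card_last_occurrence_words: "card (last_occurrence_words J j) = b ^ (J - j) * card (once_tails j)"
proof -
  have "inj_on (\<lambda>(A, S). A @ w @ S) (words (J - j) \<times> once_tails j)"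
    by (auto simp: inj_on_def once_tails_def dest: last_occurrence_unique[OF w_ne])
  then show ?thesis
    by (simp add: last_occurrence_words_def card_image card_cartesian_product card_words)
qed

lemma last_occurrence_words_disjoint:
  "j \<noteq> j' \<Longrightarrow> last_occurrence_words J j \<inter> last_occurrence_words J j' = {}"
  by (auto simp: last_occurrence_words_def once_tails_def words_def dest: last_occurrence_unique[OF w_ne])

lemma words_eq_last_occurrence_words:
  "words (J + length w) = few_occ 1 (J + length w) \<union> (\<Union>j\<le>J. last_occurrence_words J j)"
proof (intro set_eqI iffI)
  fix u assume u: "u \<in> words (J + length w)"
  show "u \<in> few_occ 1 (J + length w) \<union> (\<Union>j\<le>J. last_occurrence_words J j)"
  proof (cases "occ u = 0")
    case False
    then obtain A S where AS: "u = A @ w @ S" "occ (w @ S) = 1"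
      using last_occurrence_exists[OF w_ne, of u] by auto
    then have "length S \<le> J" "length A = J - length S" using u by (auto simp: words_def)
    then have "u \<in> last_occurrence_words J (length S)"
      using u AS by (auto simp: last_occurrence_words_def once_tails_def words_def)
    then show ?thesis using \<open>length S \<le> J\<close> by blast
  qed (use u in \<open>simp add: few_occ_def\<close>)
next
  fix u assume "u \<in> few_occ 1 (J + length w) \<union> (\<Union>j\<le>J. last_occurrence_words J j)"
  then show "u \<in> words (J + length w)"
    using w_digits by (auto simp: few_occ_def last_occurrence_words_def once_tails_def words_def)
qed

lemma card_words_by_last_occurrence:
  "b ^ (J + length w) = card (few_occ 1 (J + length w)) + (\<Sum>j\<le>J. b ^ (J - j) * card (once_tails j))"
proof -
  have occ_pos: "occ (A @ w @ S) \<noteq> 0" for A S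
    using occurrences_append_ge[OF w_ne, of A "w @ S"] occurrences_self_append_ge_1[OF w_ne, of S] by simp
  have "few_occ 1 (J + length w) \<inter> (\<Union>j\<le>J. last_occurrence_words J j) = {}"
    by (auto simp: few_occ_def last_occurrence_words_def occ_pos)
  then have "card (words (J + length w))
      = card (few_occ 1 (J + length w)) + card (\<Union>j\<le>J. last_occurrence_words J j)"
    unfolding words_eq_last_occurrence_words by (intro card_Un_disjoint) simp_all
  also have "card (\<Union>j\<le>J. last_occurrence_words J j) = (\<Sum>j\<le>J. card (last_occurrence_words J j))"
    by (rule card_UN_disjoint) (simp_all add: last_occurrence_words_disjoint)
  finally show ?thesis by (simp add: card_words card_last_occurrence_words)
qed

lemma sum_card_once_tails:
  "(\<Sum>j\<le>J. card (once_tails j) / real b ^ j) = real b ^ length w * (1 - few_occ_density 1 (J + length w))"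
proof -
  let ?p = "length w"
  have "real b ^ (J + ?p) = card (few_occ 1 (J + ?p)) + (\<Sum>j\<le>J. real b ^ (J - j) * card (once_tails j))"
    using arg_cong[OF card_words_by_last_occurrence[of J], of real] by simp
  moreover have "real b ^ (J - j) = real b ^ (J + ?p) / (real b ^ j * real b ^ ?p)" if "j \<le> J" for j
    using that base_pos by (simp add: field_simps flip: power_add)
  ultimately have "real b ^ (J + ?p) = card (few_occ 1 (J + ?p))
      + real b ^ (J + ?p) / real b ^ ?p * (\<Sum>j\<le>J. card (once_tails j) / real b ^ j)"
    by (simp add: sum_distrib_left field_simps)
  then show ?thesis using base_pos by (simp add: few_occ_density_def field_simps)
qed

lemma words_add_split:
  assumes "u \<in> words (n + m)"
  obtains x y where "u = x @ y" "x \<in> words n" "y \<in> words m" "occ x + occ y \<le> occ u"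
  using assms occurrences_append_ge[OF w_ne] unfolding words_add by auto

definition occ_pairs :: "nat \<Rightarrow> nat \<Rightarrow> nat \<Rightarrow> (nat list \<times> nat list) set" where
  "occ_pairs k n m = {(x, y) \<in> words n \<times> words m. occ x + occ y < k}"

lemma finite_occ_pairs [simp]: "finite (occ_pairs k n m)"
  by (rule finite_subset[of _ "words n \<times> words m"]) (auto simp: occ_pairs_def)

lemma few_occ_add_subset: "few_occ k (n + m) \<subseteq> (\<lambda>(x, y). x @ y) ` occ_pairs k n m"
proof
  fix u assume u: "u \<in> few_occ k (n + m)"
  then obtain x y where "u = x @ y" "x \<in> words n" "y \<in> words m" "occ x + occ y \<le> occ u"
    by (auto simp: few_occ_def elim: words_add_split)
  then show "u \<in> (\<lambda>(x, y). x @ y) ` occ_pairs k n m"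
    using u by (intro rev_image_eqI[of "(x, y)"]) (auto simp: few_occ_def occ_pairs_def)
qed

lemma card_few_occ_add_le: "card (few_occ k (n + m)) \<le> card (occ_pairs k n m)"
  by (rule surj_card_le[OF finite_occ_pairs few_occ_add_subset])

lemma few_occ_density_nonneg: "0 \<le> few_occ_density k n"
  by (simp add: few_occ_density_def)

lemma few_occ_density_le_1: "few_occ_density k n \<le> 1"
proof -
  have "card (few_occ k n) \<le> card (words n)" by (intro card_mono) (auto simp: few_occ_def)
  then show ?thesis using base_pos by (simp add: few_occ_density_def card_words divide_le_eq_1)
qed

lemma few_occ_density_add_le: "few_occ_density k (n + m) \<le> few_occ_density k n"
proof -
  have "occ_pairs k n m \<subseteq> few_occ k n \<times> words m" by (auto simp: occ_pairs_def few_occ_def)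
  then have "card (occ_pairs k n m) \<le> card (few_occ k n \<times> words m)" by (intro card_mono) simp_all
  then have "card (few_occ k (n + m)) \<le> card (few_occ k n) * b ^ m"
    using card_few_occ_add_le[of k n m] by (simp add: card_cartesian_product card_words)
  then have "real (card (few_occ k (n + m))) \<le> card (few_occ k n) * real b ^ m"
    by (metis of_nat_le_iff of_nat_mult of_nat_power)
  then show ?thesis using base_pos by (simp add: few_occ_density_def power_add field_simps)
qed

lemma few_occ_density_antimono: "n \<le> n' \<Longrightarrow> few_occ_density k n' \<le> few_occ_density k n"
  using few_occ_density_add_le[of k n "n' - n"] by simp

lemma few_occ_density_Suc_add_le: "few_occ_density (Suc k) (n + m) \<le> few_occ_density k n + few_occ_density 1 m"
proof -
  have "occ_pairs (Suc k) n m \<subseteq> few_occ k n \<times> words m \<union> words n \<times> few_occ 1 m"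
    by (auto simp: occ_pairs_def few_occ_def)
  then have "card (occ_pairs (Suc k) n m) \<le> card (few_occ k n \<times> words m \<union> words n \<times> few_occ 1 m)"
    by (intro card_mono) simp_all
  then have "card (few_occ (Suc k) (n + m)) \<le> card (few_occ k n \<times> words m \<union> words n \<times> few_occ 1 m)"
    using card_few_occ_add_le[of "Suc k" n m] by linarith
  also have "\<dots> \<le> card (few_occ k n) * b ^ m + b ^ n * card (few_occ 1 m)"
    using card_Un_le[of "few_occ k n \<times> words m" "words n \<times> few_occ 1 m"]
    by (simp add: card_cartesian_product card_words)
  finally have "real (card (few_occ (Suc k) (n + m))) \<le> card (few_occ k n) * real b ^ m + real b ^ n * card (few_occ 1 m)"
    by (metis of_nat_le_iff of_nat_add of_nat_mult of_nat_power)
  then show ?thesis using base_pos by (simp add: few_occ_density_def power_add field_simps)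
qed

lemma few_occ_density_1_add_le: "few_occ_density 1 (n + m) \<le> few_occ_density 1 n * few_occ_density 1 m"
proof -
  have "occ_pairs 1 n m \<subseteq> few_occ 1 n \<times> few_occ 1 m" by (auto simp: occ_pairs_def few_occ_def)
  then have "card (occ_pairs 1 n m) \<le> card (few_occ 1 n \<times> few_occ 1 m)" by (intro card_mono) simp_all
  then have "card (few_occ 1 (n + m)) \<le> card (few_occ 1 n) * card (few_occ 1 m)"
    using card_few_occ_add_le[of 1 n m] by (simp add: card_cartesian_product)
  then have "real (card (few_occ 1 (n + m))) \<le> card (few_occ 1 n) * real (card (few_occ 1 m))"
    by (metis of_nat_le_iff of_nat_mult)
  then show ?thesis using base_pos by (simp add: few_occ_density_def power_add field_simps)
qed

lemma few_occ_density_1_length: "few_occ_density 1 (length w) \<le> 1 - 1 / real b ^ length w"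
proof -
  have "few_occ 1 (length w) \<subseteq> words (length w) - {w}"
    using occurrences_self[OF w_ne] by (auto simp: few_occ_def)
  then have "card (few_occ 1 (length w)) \<le> b ^ length w - 1"
    using card_mono[of "words (length w) - {w}"] w_in_words by (simp add: card_words)
  moreover have "1 \<le> b ^ length w" using base_ge_2 by simp
  ultimately have "real (card (few_occ 1 (length w))) \<le> real b ^ length w - 1"
    by (metis of_nat_1 of_nat_diff of_nat_le_iff of_nat_power)
  then show ?thesis using base_pos by (simp add: few_occ_density_def field_simps)
qed

lemma few_occ_density_1_mult_le: "few_occ_density 1 (q * length w) \<le> (1 - 1 / real b ^ length w) ^ q"
proof (induction q)
  case 0
  show ?case using few_occ_density_le_1[of 1 0] by simp
next
  case (Suc q)
  have "few_occ_density 1 (length w + q * length w) \<le> few_occ_density 1 (length w) * few_occ_density 1 (q * length w)"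
    by (rule few_occ_density_1_add_le)
  also have "\<dots> \<le> (1 - 1 / real b ^ length w) * (1 - 1 / real b ^ length w) ^ q"
  proof -
    have "1 \<le> real b ^ length w" using base_ge_2 by (simp add: one_le_power)
    then have "1 / real b ^ length w \<le> 1" using base_pos by simp
    then show ?thesis using Suc few_occ_density_1_length by (intro mult_mono few_occ_density_nonneg) auto
  qed
  finally show ?case by simp
qed

lemma few_occ_density_1_tendsto_0: "few_occ_density 1 \<longlonglongrightarrow> 0"
proof (rule tendsto_sandwich[OF _ _ tendsto_const])
  let ?r = "1 - 1 / real b ^ length w"
  have r: "norm ?r < 1" using base_ge_2 w_ne by (simp add: field_simps)
  have "filterlim (\<lambda>n::nat. n div length w) at_top at_top"
    using w_ne by (intro filterlim_at_top_div_const_nat) simp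
  then show "(\<lambda>n. ?r ^ (n div length w)) \<longlonglongrightarrow> 0"
    by (rule filterlim_compose[OF LIMSEQ_power_zero[OF r]])
  have "few_occ_density 1 n \<le> ?r ^ (n div length w)" for n
    using few_occ_density_antimono[of "n div length w * length w" n 1] few_occ_density_1_mult_le[of "n div length w"]
    by simp
  then show "\<forall>\<^sub>F n in sequentially. few_occ_density 1 n \<le> ?r ^ (n div length w)" by simp
qed (simp add: few_occ_density_nonneg)

lemma few_occ_density_tendsto_0: "few_occ_density k \<longlonglongrightarrow> 0"
proof (induction k)
  case 0
  then show ?case by (simp add: few_occ_density_def few_occ_def)
next
  case (Suc k)
  show ?case
  proof (rule tendsto_sandwich[OF _ _ tendsto_const])
    have "(\<lambda>m. few_occ_density k m + few_occ_density 1 m) \<longlonglongrightarrow> 0"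
      using tendsto_add[OF Suc few_occ_density_1_tendsto_0] by simp
    moreover have "filterlim (\<lambda>n::nat. n div 2) at_top at_top"
      by (rule filterlim_at_top_div_const_nat) simp
    ultimately show "(\<lambda>n. few_occ_density k (n div 2) + few_occ_density 1 (n div 2)) \<longlonglongrightarrow> 0"
      by (rule filterlim_compose)
    have "few_occ_density (Suc k) n \<le> few_occ_density k (n div 2) + few_occ_density 1 (n div 2)" for n
    proof -
      have "n div 2 + n div 2 \<le> n" by presburger
      then show ?thesis
        using few_occ_density_antimono[of "n div 2 + n div 2" n "Suc k"]
          few_occ_density_Suc_add_le[of k "n div 2" "n div 2"] by simp
    qed
    then show "\<forall>\<^sub>F n in sequentially. few_occ_density (Suc k) n \<le> few_occ_density k (n div 2) + few_occ_density 1 (n div 2)"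
      by simp
  qed (simp add: few_occ_density_nonneg)
qed

section \<open>First hits and the main estimate\<close>

definition first_hits :: "nat \<Rightarrow> nat list set" where
  "first_hits k = {Y \<in> canonical b. occ Y = k \<and> suffix w Y}"

definition with_occ :: "nat \<Rightarrow> nat list set" where
  "with_occ k = {L \<in> canonical b. occ L = k}"

definition tails_upto :: "nat \<Rightarrow> nat list set" where
  "tails_upto J = (\<Union>j\<le>J. once_tails j)"

lemma prefix_free_first_hits: "prefix_free (first_hits k)"
  unfolding prefix_free_def
proof (intro ballI impI)
  fix Y Y' assume Y: "Y \<in> first_hits k" and Y': "Y' \<in> first_hits k" and "prefix Y Y'"
  then obtain X where X: "Y' = Y @ X" by (auto simp: prefix_def)
  show "Y = Y'"
  proof (cases X rule: rev_cases)
    case (snoc X' d)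
    have "occ Y' = occ (Y @ X') + 1"
      using Y' X snoc occurrences_snoc[OF w_ne, of "Y @ X'" d] by (simp add: first_hits_def del: suffix_snoc)
    moreover have "occ Y \<le> occ (Y @ X')" by (rule occurrences_append_mono[OF w_ne])
    ultimately show ?thesis using Y Y' by (simp add: first_hits_def)
  qed (simp add: X)
qed

lemma length_first_hits: "1 \<le> k \<Longrightarrow> Y \<in> first_hits k \<Longrightarrow> k + length w - 1 \<le> length Y"
  using occurrences_le_length[of w Y] by (auto simp: first_hits_def)

lemma finite_first_hits_upto: "finite {Y \<in> first_hits k. length Y \<le> N}"
  by (rule finite_subset[OF _ finite_lists_length_le[of "{..<b}" N]])
    (auto simp: first_hits_def canonical_def)

lemma first_hits_prefix:
  assumes "1 \<le> k" "u \<in> canonical b" "k \<le> occ u"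
  shows "\<exists>Y\<in>first_hits k. prefix Y u"
  using assms(2,3)
proof (induction u rule: rev_induct)
  case (snoc d u)
  show ?case
  proof (cases "k \<le> occ u")
    case True
    then have "u \<noteq> []" using assms(1) occurrences_short[of "[]" w] w_ne by auto
    then have "u \<in> canonical b" using snoc.prems(1) by (simp add: canonical_def)
    then show ?thesis using snoc.IH True prefix_order.trans[of _ u "u @ [d]"] by auto
  next
    case False
    then have "suffix w (u @ [d])" and "occ (u @ [d]) = k"
      using snoc.prems(2) occurrences_snoc[OF w_ne, of u d] by (auto split: if_splits simp del: suffix_snoc)
    then have "u @ [d] \<in> first_hits k" using snoc.prems(1) by (simp add: first_hits_def del: suffix_snoc)
    then show ?thesis by blast
  qed
qed (simp add: canonical_def)

lemma with_occ_decompose: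
  assumes "1 \<le> k" "u \<in> with_occ k"
  obtains Y S where "u = Y @ S" "Y \<in> first_hits k" "S \<in> once_tails (length S)"
proof -
  have u: "u \<in> canonical b" "occ u = k" using assms(2) by (auto simp: with_occ_def)
  obtain A S where AS: "u = A @ w @ S" "occ (w @ S) = 1"
    using last_occurrence_exists[OF w_ne, of u] u assms(1) by auto
  have "occ u = occ (A @ w)" using occurrences_join[OF w_ne, of A S] AS by simp
  moreover have "A @ w \<in> canonical b" using u(1) AS w_ne by (cases A) (auto simp: canonical_def)
  ultimately have "A @ w \<in> first_hits k" using u(2) by (simp add: first_hits_def suffix_def)
  moreover have "S \<in> once_tails (length S)" using u(1) AS by (auto simp: once_tails_def words_def canonical_def)
  ultimately show ?thesis using that[of "A @ w" S] AS by simp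
qed

lemma first_hits_append_once_tails:
  assumes "Y \<in> first_hits k" "S \<in> once_tails j"
  shows "Y @ S \<in> with_occ k"
proof -
  obtain A where A: "Y = A @ w" using assms(1) by (auto simp: first_hits_def suffix_def)
  have "occ (A @ w @ S) = occ (A @ w) + occ (w @ S) - 1" by (rule occurrences_join[OF w_ne])
  then have "occ (Y @ S) = k" using assms A by (simp add: first_hits_def once_tails_def)
  moreover have "Y @ S \<in> canonical b"
    using assms by (intro canonical_append) (auto simp: first_hits_def once_tails_def words_def)
  ultimately show ?thesis by (simp add: with_occ_def)
qed

lemma finite_tails_upto [simp]: "finite (tails_upto J)"
  by (simp add: tails_upto_def)

lemma sum_tails_upto: "(\<Sum>S\<in>tails_upto J. f S) = (\<Sum>j\<le>J. \<Sum>S\<in>once_tails j. f S)"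
proof -
  have "\<forall>i\<in>{..J}. \<forall>j\<in>{..J}. i \<noteq> j \<longrightarrow> once_tails i \<inter> once_tails j = {}"
    by (auto simp: once_tails_def words_def)
  then show ?thesis unfolding tails_upto_def by (intro sum.UNION_disjoint) simp_all
qed

definition hit_bound :: "nat \<Rightarrow> real" where
  "hit_bound k = (1 - 1 / b) / real b ^ (k + length w - 2)"

lemma sum_inv_width_first_hits_le:
  assumes "1 \<le> k" "finite Q" "Q \<subseteq> first_hits k"
  shows "(\<Sum>Y\<in>Q. inv_width (val Y)) \<le> hit_bound k"
proof -
  have "prefix_free Q" by (rule prefix_free_subset[OF prefix_free_first_hits assms(3)])
  moreover have "Q \<subseteq> canonical b" using assms(3) by (auto simp: first_hits_def)
  moreover have "1 \<le> k + length w - 1" using assms(1) w_ne by (cases w) auto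
  moreover have "\<forall>Y\<in>Q. k + length w - 1 \<le> length Y" using assms length_first_hits by blast
  ultimately have "(\<Sum>Y\<in>Q. inv_width (val Y)) \<le> (1 - 1 / b) / real b ^ (k + length w - 1 - 1)"
    by (intro sum_inv_width_prefix_free_le assms(2))
  then show ?thesis by (simp add: hit_bound_def numeral_2_eq_2)
qed

lemma sum_log_width_first_hits_ge:
  assumes "1 \<le> k" "1 \<le> N"
  shows "ln b - real b * few_occ_density k N \<le> (\<Sum>Y\<in>{Y \<in> first_hits k. length Y \<le> N}. log_width (val Y))"
proof -
  let ?Q = "{Y \<in> first_hits k. length Y \<le> N}"
  have "{u \<in> level N. \<not> (\<exists>Y\<in>?Q. prefix Y u)} \<subseteq> few_occ k N"
  proof
    fix u assume u: "u \<in> {u \<in> level N. \<not> (\<exists>Y\<in>?Q. prefix Y u)}"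
    have "occ u < k"
    proof (rule ccontr)
      assume "\<not> occ u < k"
      moreover have "u \<in> canonical b" using u by (simp add: level_def)
      ultimately obtain Y where "Y \<in> first_hits k" "prefix Y u"
        using first_hits_prefix[OF assms(1)] by (meson not_less)
      then show False using u prefix_length_le[of Y u] by (auto simp: level_def)
    qed
    then show "u \<in> few_occ k N" using u by (auto simp: few_occ_def words_def level_def canonical_def)
  qed
  then have "card {u \<in> level N. \<not> (\<exists>Y\<in>?Q. prefix Y u)} / real b ^ (N - 1)
      \<le> card (few_occ k N) / real b ^ (N - 1)"
    by (intro divide_right_mono of_nat_mono card_mono) simp_all
  also have "\<dots> = real b * few_occ_density k N"
    using assms(2) base_pos by (simp add: few_occ_density_def field_simps power_eq_if)
  finally have "card {u \<in> level N. \<not> (\<exists>Y\<in>?Q. prefix Y u)} / real b ^ (N - 1) \<le> real b * few_occ_density k N" .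
  moreover have "prefix_free ?Q" by (rule prefix_free_subset[OF prefix_free_first_hits]) blast
  moreover have "?Q \<subseteq> canonical b" by (auto simp: first_hits_def)
  ultimately show ?thesis
    using sum_log_width_prefix_free_ge[OF finite_first_hits_upto _ _ _ assms(2)] by fastforce
qed

lemma sum_inv_val_tails_le:
  assumes "Y \<in> canonical b"
  shows "(\<Sum>S\<in>tails_upto J. 1 / val (Y @ S)) \<le> real b ^ length w / val Y"
proof -
  have "(\<Sum>S\<in>tails_upto J. 1 / val (Y @ S)) \<le> (\<Sum>j\<le>J. \<Sum>S\<in>once_tails j. 1 / (real b ^ j * val Y))"
    unfolding sum_tails_upto
  proof (intro sum_mono)
    fix j S assume "S \<in> once_tails j"
    then have S: "S \<in> words j" by (simp add: once_tails_def)
    have "0 < val (Y @ S)" using S assms by (intro val_pos canonical_append) (auto simp: words_def)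
    moreover have "real b ^ j * val Y \<le> val (Y @ S)"
      using val_append_bounds(1)[OF S, of Y] by (simp add: mult.commute)
    ultimately show "1 / val (Y @ S) \<le> 1 / (real b ^ j * val Y)"
      using val_pos[OF assms] base_pos by (intro divide_left_mono) auto
  qed
  also have "\<dots> = (\<Sum>j\<le>J. card (once_tails j) / real b ^ j) / val Y"
    by (simp add: sum_divide_distrib)
  also have "\<dots> = real b ^ length w * (1 - few_occ_density 1 (J + length w)) / val Y"
    by (simp add: sum_card_once_tails)
  also have "\<dots> \<le> real b ^ length w / val Y"
    using val_pos[OF assms] few_occ_density_nonneg[of 1 "J + length w"] base_pos
    by (intro divide_right_mono) (auto simp: mult_left_le)
  finally show ?thesis .
qed

lemma sum_inv_val_tails_ge:
  assumes "Y \<in> canonical b"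
  shows "real b ^ length w * (1 - few_occ_density 1 (J + length w)) / (val Y + 1)
    \<le> (\<Sum>S\<in>tails_upto J. 1 / val (Y @ S))"
proof -
  have "real b ^ length w * (1 - few_occ_density 1 (J + length w)) / (val Y + 1)
      = (\<Sum>j\<le>J. card (once_tails j) / real b ^ j) / (val Y + 1)"
    by (simp add: sum_card_once_tails)
  also have "\<dots> = (\<Sum>j\<le>J. \<Sum>S\<in>once_tails j. 1 / (real b ^ j * (val Y + 1)))"
    by (simp add: sum_divide_distrib)
  also have "\<dots> \<le> (\<Sum>S\<in>tails_upto J. 1 / val (Y @ S))"
    unfolding sum_tails_upto
  proof (intro sum_mono)
    fix j S assume "S \<in> once_tails j"
    then have S: "S \<in> words j" by (simp add: once_tails_def)
    have "0 < val (Y @ S)" using S assms by (intro val_pos canonical_append) (auto simp: words_def)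
    moreover have "val (Y @ S) \<le> real b ^ j * (val Y + 1)"
      using val_append_bounds(2)[OF S, of Y] by (simp add: mult.commute)
    ultimately show "1 / (real b ^ j * (val Y + 1)) \<le> 1 / val (Y @ S)"
      using val_pos[OF assms] base_pos by (intro divide_left_mono) auto
  qed
  finally show ?thesis .
qed

lemma with_occ_subset_append:
  assumes "1 \<le> k" "F \<subseteq> {u \<in> with_occ k. length u \<le> M}"
  shows "F \<subseteq> (\<lambda>(Y, S). Y @ S) ` ({Y \<in> first_hits k. length Y \<le> M} \<times> tails_upto M)"
proof
  fix u assume u: "u \<in> F"
  then obtain Y S where "u = Y @ S" "Y \<in> first_hits k" "S \<in> once_tails (length S)"
    using with_occ_decompose[OF assms(1)] assms(2) by blast
  then show "u \<in> (\<lambda>(Y, S). Y @ S) ` ({Y \<in> first_hits k. length Y \<le> M} \<times> tails_upto M)"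
    using assms(2) u by (intro rev_image_eqI[of "(Y, S)"]) (auto simp: tails_upto_def intro!: bexI[of _ "length S"])
qed

lemma sum_with_occ_le:
  assumes "1 \<le> k" "finite F" "F \<subseteq> with_occ k"
  shows "(\<Sum>u\<in>F. 1 / val u) \<le> real b ^ length w * (ln b + hit_bound k)"
proof -
  obtain M where M: "\<forall>u\<in>F. length u \<le> M"
    using assms(2) finite_nat_set_iff_bounded_le[of "length ` F"] by auto
  let ?Q = "{Y \<in> first_hits k. length Y \<le> M}"
  have Q: "prefix_free ?Q" "?Q \<subseteq> first_hits k" "?Q \<subseteq> canonical b"
    by (rule prefix_free_subset[OF prefix_free_first_hits[of k]], auto simp: first_hits_def)
  have "F \<subseteq> (\<lambda>(Y, S). Y @ S) ` (?Q \<times> tails_upto M)"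
    using assms(3) M by (intro with_occ_subset_append[OF assms(1)]) auto
  then have "(\<Sum>u\<in>F. 1 / val u) \<le> (\<Sum>u\<in>(\<lambda>(Y, S). Y @ S) ` (?Q \<times> tails_upto M). 1 / val u)"
    by (intro sum_mono2) (simp_all add: finite_first_hits_upto)
  also have "\<dots> = (\<Sum>Y\<in>?Q. \<Sum>S\<in>tails_upto M. 1 / val (Y @ S))"
    by (rule sum_append_prefix_free[OF Q(1)])
  also have "\<dots> \<le> (\<Sum>Y\<in>?Q. real b ^ length w * (log_width (val Y) + inv_width (val Y)))"
  proof (rule sum_mono)
    fix Y assume "Y \<in> ?Q"
    then have Y: "Y \<in> canonical b" using Q(3) by blast
    have "(\<Sum>S\<in>tails_upto M. 1 / val (Y @ S)) \<le> real b ^ length w * (1 / val Y)"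
      using sum_inv_val_tails_le[OF Y] by simp
    also have "\<dots> \<le> real b ^ length w * (log_width (val Y) + inv_width (val Y))"
      using inverse_le_log_width_add_inv_width[OF val_pos[OF Y]] base_pos by (intro mult_left_mono) auto
    finally show "(\<Sum>S\<in>tails_upto M. 1 / val (Y @ S))
        \<le> real b ^ length w * (log_width (val Y) + inv_width (val Y))" .
  qed
  also have "\<dots> = real b ^ length w * ((\<Sum>Y\<in>?Q. log_width (val Y)) + (\<Sum>Y\<in>?Q. inv_width (val Y)))"
    by (simp add: distrib_left sum.distrib sum_distrib_left)
  also have "\<dots> \<le> real b ^ length w * (ln b + hit_bound k)"
    using sum_log_width_prefix_free_le[OF finite_first_hits_upto Q(1,3)]
      sum_inv_width_first_hits_le[OF assms(1) finite_first_hits_upto Q(2)] base_pos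
    by (intro mult_left_mono add_mono) auto
  finally show ?thesis .
qed

lemma sum_with_occ_ge:
  assumes "1 \<le> k" "1 \<le> N"
  obtains F where "finite F" "F \<subseteq> with_occ k"
    "real b ^ length w * (1 - few_occ_density 1 (N + length w)) * (ln b - real b * few_occ_density k N - hit_bound k)
      \<le> (\<Sum>u\<in>F. 1 / val u)"
proof -
  let ?Q = "{Y \<in> first_hits k. length Y \<le> N}"
  let ?F = "(\<lambda>(Y, S). Y @ S) ` (?Q \<times> tails_upto N)"
  define c where "c = real b ^ length w * (1 - few_occ_density 1 (N + length w))"
  have c: "0 \<le> c" using few_occ_density_le_1[of 1 "N + length w"] base_pos by (simp add: c_def)
  have Q: "prefix_free ?Q" "?Q \<subseteq> first_hits k"
    by (rule prefix_free_subset[OF prefix_free_first_hits[of k]], auto)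
  have "c * (ln b - real b * few_occ_density k N - hit_bound k)
      \<le> c * ((\<Sum>Y\<in>?Q. log_width (val Y)) - (\<Sum>Y\<in>?Q. inv_width (val Y)))"
    using sum_log_width_first_hits_ge[OF assms] sum_inv_width_first_hits_le[OF assms(1) finite_first_hits_upto Q(2)]
    by (intro mult_left_mono c) linarith
  also have "\<dots> = (\<Sum>Y\<in>?Q. c * (log_width (val Y) - inv_width (val Y)))"
    by (simp add: sum_distrib_left sum_subtractf right_diff_distrib)
  also have "\<dots> \<le> (\<Sum>Y\<in>?Q. \<Sum>S\<in>tails_upto N. 1 / val (Y @ S))"
  proof (rule sum_mono)
    fix Y assume "Y \<in> ?Q"
    then have Y: "Y \<in> canonical b" by (simp add: first_hits_def)
    have "c * (log_width (val Y) - inv_width (val Y)) \<le> c / (val Y + 1)"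
      using mult_left_mono[OF log_width_diff_inv_width_le[OF val_pos[OF Y]] c] by simp
    also have "\<dots> \<le> (\<Sum>S\<in>tails_upto N. 1 / val (Y @ S))"
      using sum_inv_val_tails_ge[OF Y, of N] by (simp add: c_def)
    finally show "c * (log_width (val Y) - inv_width (val Y)) \<le> (\<Sum>S\<in>tails_upto N. 1 / val (Y @ S))" .
  qed
  also have "\<dots> = (\<Sum>u\<in>?F. 1 / val u)"
    by (rule sum_append_prefix_free[OF Q(1), symmetric])
  finally have "c * (ln b - real b * few_occ_density k N - hit_bound k) \<le> (\<Sum>u\<in>?F. 1 / val u)" .
  moreover have "?F \<subseteq> with_occ k"
    using first_hits_append_once_tails by (auto simp: tails_upto_def)
  ultimately show ?thesis using that[of ?F] finite_first_hits_upto by (simp add: c_def)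
qed

lemma with_occ_summable: "1 \<le> k \<Longrightarrow> (\<lambda>L. 1 / val L) summable_on with_occ k"
  by (rule nonneg_bdd_above_summable_on)
    (auto intro!: bdd_aboveI[of _ "real b ^ length w * (ln b + hit_bound k)"] sum_with_occ_le)

lemma infsum_with_occ_bounds:
  assumes "1 \<le> k"
  shows "\<bar>(\<Sum>\<^sub>\<infinity>L\<in>with_occ k. 1 / val L) - real b ^ length w * ln b\<bar> \<le> real b ^ length w * hit_bound k"
proof -
  let ?S = "\<Sum>\<^sub>\<infinity>L\<in>with_occ k. 1 / val L"
  have summable: "(\<lambda>L. 1 / val L) summable_on with_occ k" by (rule with_occ_summable[OF assms])
  have upper: "?S \<le> real b ^ length w * (ln b + hit_bound k)"
    by (rule infsum_le_finite_sums[OF summable sum_with_occ_le[OF assms]])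
  define X where "X N = real b ^ length w * (1 - few_occ_density 1 (N + length w))
      * (ln b - real b * few_occ_density k N - hit_bound k)" for N
  have "X N \<le> ?S" if N: "1 \<le> N" for N
  proof -
    obtain F where F: "finite F" "F \<subseteq> with_occ k" "X N \<le> (\<Sum>u\<in>F. 1 / val u)"
      using sum_with_occ_ge[OF assms N] unfolding X_def by blast
    have "(\<Sum>u\<in>F. 1 / val u) \<le> ?S" by (rule finite_sum_le_infsum[OF summable F(1,2)]) simp
    then show ?thesis using F(3) by linarith
  qed
  then have "\<forall>N\<ge>1. X N \<le> ?S" by blast
  moreover have "X \<longlonglongrightarrow> real b ^ length w * (1 - 0) * (ln b - real b * 0 - hit_bound k)"
    unfolding X_def
    by (intro tendsto_intros few_occ_density_tendsto_0 LIMSEQ_ignore_initial_segment[OF few_occ_density_tendsto_0])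
  ultimately have "real b ^ length w * (ln b - hit_bound k) \<le> ?S"
    using LIMSEQ_le_const2[of X] by fastforce
  then show ?thesis using upper by (simp add: abs_le_iff algebra_simps)
qed

lemma hit_bound_le:
  assumes "1 \<le> k"
  shows "real b ^ length w * hit_bound k \<le> (real b - 1) * real b powr (real (length w) - real (max k 2) + 1)"
proof -
  have p: "1 \<le> length w" using w_ne by (cases w) auto
  have "real b ^ length w = real b * real b ^ (length w - 1)"
    using p by (metis Suc_diff_le diff_Suc_1 power_Suc)
  moreover have "k + length w - 2 = (k - 1) + (length w - 1)" using assms p by simp
  then have "real b ^ (k + length w - 2) = real b ^ (k - 1) * real b ^ (length w - 1)"
    by (simp only: power_add)
  ultimately have "real b ^ length w * hit_bound k = (real b - 1) / real b ^ (k - 1)"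
    using base_pos by (simp add: hit_bound_def field_simps)
  also have "\<dots> = (real b - 1) * real b powr (1 - real k)"
  proof -
    have "real b powr (1 - real k) = real b powr (- real (k - 1))" using assms by (simp add: of_nat_diff)
    also have "\<dots> = 1 / real b ^ (k - 1)" using base_pos by (simp add: powr_minus_divide powr_realpow)
    finally show ?thesis by simp
  qed
  also have "\<dots> \<le> (real b - 1) * real b powr (real (length w) - real (max k 2) + 1)"
    using base_ge_2 p assms by (intro mult_left_mono powr_mono) (auto simp: max_def)
  finally show ?thesis .
qed

end

theorem theorem1:
  fixes b k :: nat and w :: "nat list"
  assumes "b \<ge> 2" and "length w \<ge> 1" and "\<forall>d\<in>set w. d < b" and "k \<ge> 1"
  shows "(\<lambda>m. 1 / real m) summable_on occ_set b w k \<and>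
    \<bar>(\<Sum>\<^sub>\<infinity>m\<in>occ_set b w k. 1 / real m) - real b ^ length w * ln (real b)\<bar>
      \<le> (real b - 1) * real b powr (real (length w) - real (max k 2) + 1)"
proof -
  interpret digit_word b w
    by unfold_locales (use assms in auto)
  have bij: "bij_betw (of_digits b) (with_occ k) (occ_set b w k)"
    using bij_betw_of_digits[OF assms(1), of "\<lambda>L. occurrences w L = k"]
    by (simp add: with_occ_def occ_set_def)
  have "(\<lambda>m. 1 / real m) summable_on occ_set b w k"
    using with_occ_summable[OF assms(4)] summable_on_reindex_bij_betw[OF bij, of "\<lambda>m. 1 / real m"] by simp
  moreover have "(\<Sum>\<^sub>\<infinity>m\<in>occ_set b w k. 1 / real m) = (\<Sum>\<^sub>\<infinity>L\<in>with_occ k. 1 / val L)"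
    using infsum_reindex_bij_betw[OF bij, of "\<lambda>m. 1 / real m"] by simp
  ultimately show ?thesis
    using infsum_with_occ_bounds[OF assms(4)] hit_bound_le[OF assms(4)] by simp
qed

end
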